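(* Let $A$ be a Banach algebra with a central bounded approximate identity. Then every approximately semi-inner derivation from $A$ into a Banach $A$-bimodule is approximately inner. In particular, this holds when $A$ is unital.
   Context: For a Banach algebra $A$ and a Banach $A$-bimodule $X$, a derivation is a linear map $D:A\to X$ with $D(ab)=a\cdot D(b)+D(a)\cdot b$. A continuous derivation $D:A\to X$ is approximately semi-inner if there are nets $(\xi_i),(\eta_i)$ in $X$ (over the same directed set) with $D(a)=\lim_i(a\cdot\xi_i-\eta_i\cdot a)$ in norm for every $a\in A$; it is approximately inner if there is a net $(\xi_i)$ in $X$ with $D(a)=\lim_i(a\cdot\xi_i-\xi_i\cdot a)$ in norm for every $a\in A$. A central bounded approximate identity is a bounded net $(e_\alpha)$ of elements of the centre of $A$ with $e_\alpha a\to a$ for all $a\in A$. *)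

theory Defs
  imports "HOL-Analysis.Analysis"
begin

definition banach_bimodule ::
  "('a::{real_normed_algebra,banach} \<Rightarrow> 'x::banach \<Rightarrow> 'x) \<Rightarrow> ('x \<Rightarrow> 'a \<Rightarrow> 'x) \<Rightarrow> bool" where
  "banach_bimodule lm rm \<longleftrightarrow>
     bounded_bilinear lm \<and> bounded_bilinear rm \<and>
     (\<forall>a b x. lm a (lm b x) = lm (a * b) x) \<and>
     (\<forall>x a b. rm (rm x a) b = rm x (a * b)) \<and>
     (\<forall>a x b. rm (lm a x) b = lm a (rm x b))"

definition derivation ::
  "('a::{real_normed_algebra,banach} \<Rightarrow> 'x::banach \<Rightarrow> 'x) \<Rightarrow> ('x \<Rightarrow> 'a \<Rightarrow> 'x) \<Rightarrow> ('a \<Rightarrow> 'x) \<Rightarrow> bool" where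
  "derivation lm rm D \<longleftrightarrow> linear D \<and> (\<forall>a b. D (a * b) = lm a (D b) + rm (D a) b)"

text \<open>Nets are represented by proper filters (F \<noteq> bot) on the space of values:
a net (x_i) over a directed set corresponds to its image filter, and conversely
every proper filter is the tail filter of a net.\<close>

definition approx_semi_inner ::
  "('a::{real_normed_algebra,banach} \<Rightarrow> 'x::banach \<Rightarrow> 'x) \<Rightarrow> ('x \<Rightarrow> 'a \<Rightarrow> 'x) \<Rightarrow> ('a \<Rightarrow> 'x) \<Rightarrow> bool" where
  "approx_semi_inner lm rm D \<longleftrightarrow>
     bounded_linear D \<and>
     (\<exists>F :: ('x \<times> 'x) filter. F \<noteq> bot \<and>
        (\<forall>a. ((\<lambda>(\<xi>, \<eta>). lm a \<xi> - rm \<eta> a) \<longlongrightarrow> D a) F))"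

definition approx_inner ::
  "('a::{real_normed_algebra,banach} \<Rightarrow> 'x::banach \<Rightarrow> 'x) \<Rightarrow> ('x \<Rightarrow> 'a \<Rightarrow> 'x) \<Rightarrow> ('a \<Rightarrow> 'x) \<Rightarrow> bool" where
  "approx_inner lm rm D \<longleftrightarrow>
     bounded_linear D \<and>
     (\<exists>F :: 'x filter. F \<noteq> bot \<and>
        (\<forall>a. ((\<lambda>\<xi>. lm a \<xi> - rm \<xi> a) \<longlongrightarrow> D a) F))"

definition has_central_bai :: "'a::{real_normed_algebra,banach} itself \<Rightarrow> bool" where
  "has_central_bai (_::'a itself) \<longleftrightarrow>
     (\<exists>(F :: 'a filter) K. F \<noteq> bot \<and>
        eventually (\<lambda>e. (\<forall>b. e * b = b * e) \<and> norm e \<le> K) F \<and>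
        (\<forall>a. ((\<lambda>e. e * a) \<longlongrightarrow> a) F))"

end

(*
  Let the pairs (\<xi>, \<eta>) implement D approximately semi-innerly and let e be central.
  Multiplying by e on the proper side turns semi-inner into inner:
  a (e \<xi>) - (e \<xi>) a \<rightarrow> e D(a)  and  a (\<eta> e) - (\<eta> e) a \<rightarrow> D(a) e,
  so \<zeta> = e \<xi> + \<eta> e - e \<xi> e  gives  a \<zeta> - \<zeta> a \<rightarrow> D(a) - (1 - e) D(a) (1 - e).
  By the derivation rule, (1 - e) D(a) (1 - e) = D(a - e a) (1 - e) + D(e) (a - a e),
  which tends to 0 along a bounded central approximate identity.
  A diagonal choice over e and the net (\<xi>, \<eta>) gives the net for approximate innerness;
  a unit is a one-point central approximate identity.
*)
theory Submission
  imports Defs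
begin

lemma ex_proper_filter_tendsto_if_finite_approx:
  fixes f :: "'a \<Rightarrow> 'z \<Rightarrow> 'b::metric_space"
  assumes approx: "\<And>S \<epsilon>. finite S \<Longrightarrow> \<epsilon> > 0 \<Longrightarrow> \<exists>\<zeta>. \<forall>a\<in>S. dist (f a \<zeta>) (g a) < \<epsilon>"
  shows "\<exists>G. G \<noteq> bot \<and> (\<forall>a. (f a \<longlongrightarrow> g a) G)"
proof (intro exI conjI allI)
  define B where "B = {(S :: 'a set, \<epsilon> :: real). finite S \<and> \<epsilon> > 0}"
  define P where "P = (\<lambda>(S, \<epsilon>). principal {\<zeta>. \<forall>a\<in>S. dist (f a \<zeta>) (g a) < \<epsilon>})"
  have directed: "\<exists>c\<in>B. P c \<le> inf (P b) (P b')" if "b \<in> B" "b' \<in> B" for b b'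
  proof
    show "(fst b \<union> fst b', min (snd b) (snd b')) \<in> B"
      using that by (auto simp: B_def)
    show "P (fst b \<union> fst b', min (snd b) (snd b')) \<le> inf (P b) (P b')"
      by (auto simp: P_def inf_principal split: prod.splits)
  qed
  have "B \<noteq> {}"
    by (auto simp: B_def intro: exI[of _ "{}"] exI[of _ 1])
  then have eventually_G: "eventually Q (INF b\<in>B. P b) \<longleftrightarrow> (\<exists>b\<in>B. eventually Q (P b))" for Q
    using directed by (rule eventually_INF_base)
  show "(INF b\<in>B. P b) \<noteq> bot"
  proof
    assume "(INF b\<in>B. P b) = bot"
    then obtain S \<epsilon> where "finite S" "\<epsilon> > 0" "eventually (\<lambda>_. False) (P (S, \<epsilon>))"
      using eventually_G[of "\<lambda>_. False"] by (auto simp: B_def)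
    then show False
      using approx by (auto simp: P_def eventually_principal)
  qed
  fix a
  show "(f a \<longlongrightarrow> g a) (INF b\<in>B. P b)"
  proof (rule tendstoI)
    fix \<epsilon> :: real
    assume "\<epsilon> > 0"
    then have "({a}, \<epsilon>) \<in> B"
      by (simp add: B_def)
    then show "eventually (\<lambda>\<zeta>. dist (f a \<zeta>) (g a) < \<epsilon>) (INF b\<in>B. P b)"
      unfolding eventually_G by (rule bexI[rotated]) (simp add: P_def eventually_principal)
  qed
qed

lemma ex_proper_filter_tendsto_diagonal:
  fixes f :: "'a \<Rightarrow> 'z \<Rightarrow> 'b::metric_space"
  assumes "E \<noteq> bot" "F \<noteq> bot"
    and inner: "eventually (\<lambda>e. \<forall>a. ((\<lambda>p. f a (Z e p)) \<longlongrightarrow> h e a) F) E"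
    and outer: "\<And>a. ((\<lambda>e. h e a) \<longlongrightarrow> g a) E"
  shows "\<exists>G. G \<noteq> bot \<and> (\<forall>a. (f a \<longlongrightarrow> g a) G)"
proof (rule ex_proper_filter_tendsto_if_finite_approx)
  fix S :: "'a set" and \<epsilon> :: real
  assume "finite S" "\<epsilon> > 0"
  have "\<forall>a\<in>S. eventually (\<lambda>e. dist (h e a) (g a) < \<epsilon>/2) E"
    using \<open>\<epsilon> > 0\<close> by (intro ballI tendstoD outer) simp
  then have "eventually (\<lambda>e. \<forall>a\<in>S. dist (h e a) (g a) < \<epsilon>/2) E"
    by (rule eventually_ball_finite[OF \<open>finite S\<close>])
  with inner obtain e where
    e_inner: "\<forall>a. ((\<lambda>p. f a (Z e p)) \<longlongrightarrow> h e a) F" and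
    e_outer: "\<forall>a\<in>S. dist (h e a) (g a) < \<epsilon>/2"
    using eventually_happens'[OF \<open>E \<noteq> bot\<close> eventually_conj] by blast
  have "\<forall>a\<in>S. eventually (\<lambda>p. dist (f a (Z e p)) (h e a) < \<epsilon>/2) F"
    using e_inner \<open>\<epsilon> > 0\<close> by (intro ballI tendstoD) simp_all
  then have "eventually (\<lambda>p. \<forall>a\<in>S. dist (f a (Z e p)) (h e a) < \<epsilon>/2) F"
    by (rule eventually_ball_finite[OF \<open>finite S\<close>])
  then obtain p where "\<forall>a\<in>S. dist (f a (Z e p)) (h e a) < \<epsilon>/2"
    using eventually_happens'[OF \<open>F \<noteq> bot\<close>] by blast
  with e_outer have "\<forall>a\<in>S. dist (f a (Z e p)) (g a) < \<epsilon>"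
    using dist_triangle_half_l[of _ _ \<epsilon>] by (metis dist_commute)
  then show "\<exists>\<zeta>. \<forall>a\<in>S. dist (f a \<zeta>) (g a) < \<epsilon>" ..
qed

lemma (in bounded_bilinear) tendsto_Bfun_prod_zero:
  "Bfun f F \<Longrightarrow> (g \<longlongrightarrow> 0) F \<Longrightarrow> ((\<lambda>x. prod (f x) (g x)) \<longlongrightarrow> 0) F"
  by (simp add: tendsto_Zfun_iff Bfun_prod_Zfun)

lemma (in bounded_bilinear) tendsto_zero_prod_Bfun:
  "(f \<longlongrightarrow> 0) F \<Longrightarrow> Bfun g F \<Longrightarrow> ((\<lambda>x. prod (f x) (g x)) \<longlongrightarrow> 0) F"
  by (simp add: tendsto_Zfun_iff Zfun_prod_Bfun)

lemma has_central_bai_if_unit: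
  fixes u :: "'a::{real_normed_algebra,banach}"
  assumes "\<forall>a. u * a = a \<and> a * u = a"
  shows "has_central_bai TYPE('a)"
  unfolding has_central_bai_def
proof (intro exI conjI allI)
  show "principal {u} \<noteq> bot"
    by (simp add: principal_eq_bot_iff)
  show "eventually (\<lambda>e. (\<forall>b. e * b = b * e) \<and> norm e \<le> norm u) (principal {u})"
    using assms by (simp add: eventually_principal)
  show "((\<lambda>e. e * a) \<longlongrightarrow> a) (principal {u})" for a
    using assms by (simp add: tendsto_eventually eventually_principal)
qed

locale bimodule_derivation =
  fixes lm :: "'a::{real_normed_algebra,banach} \<Rightarrow> 'x::banach \<Rightarrow> 'x"
    and rm :: "'x \<Rightarrow> 'a \<Rightarrow> 'x"
    and D :: "'a \<Rightarrow> 'x"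
  assumes bimodule: "banach_bimodule lm rm"
    and derivation: "derivation lm rm D"
begin

lemma bounded_bilinear_lm: "bounded_bilinear lm"
  and bounded_bilinear_rm: "bounded_bilinear rm"
  and lm_lm: "lm a (lm b x) = lm (a * b) x"
  and rm_rm: "rm (rm x a) b = rm x (a * b)"
  and rm_lm: "rm (lm a x) b = lm a (rm x b)"
  using bimodule unfolding banach_bimodule_def by auto

lemma D_mult: "D (a * b) = lm a (D b) + rm (D a) b"
  using derivation unfolding derivation_def by auto

lemma D_diff: "D (a - b) = D a - D b"
  using derivation unfolding derivation_def by (simp add: linear_diff)

lemmas bilinear_simps =
  bounded_bilinear.add_left[OF bounded_bilinear_lm] bounded_bilinear.add_right[OF bounded_bilinear_lm]
  bounded_bilinear.diff_left[OF bounded_bilinear_lm] bounded_bilinear.diff_right[OF bounded_bilinear_lm]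
  bounded_bilinear.add_left[OF bounded_bilinear_rm] bounded_bilinear.add_right[OF bounded_bilinear_rm]
  bounded_bilinear.diff_left[OF bounded_bilinear_rm] bounded_bilinear.diff_right[OF bounded_bilinear_rm]

definition commutator :: "'a \<Rightarrow> 'x \<Rightarrow> 'x" where
  "commutator a x = lm a x - rm x a"

text \<open>Formally \<open>x - (1 - e) x (1 - e)\<close>, written without a unit.\<close>
definition compress :: "'a \<Rightarrow> 'x \<Rightarrow> 'x" where
  "compress e x = lm e x + rm x e - rm (lm e x) e"

lemma compress_defect:
  "D a - compress e (D a) = D (a - e * a) - rm (D (a - e * a)) e + rm (D e) (a - a * e)"
  by (simp add: compress_def D_diff D_mult bilinear_simps rm_lm rm_rm)

lemma tendsto_compress:
  assumes "bounded_linear D"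
    and bounded: "Bfun (\<lambda>e. e) F"
    and left: "((\<lambda>e. e * a) \<longlongrightarrow> a) F"
    and right: "((\<lambda>e. a * e) \<longlongrightarrow> a) F"
  shows "((\<lambda>e. compress e (D a)) \<longlongrightarrow> D a) F"
proof -
  have "((\<lambda>e. a - e * a) \<longlongrightarrow> 0) F"
    using tendsto_diff[OF tendsto_const[of a] left] by simp
  then have left_defect: "((\<lambda>e. D (a - e * a)) \<longlongrightarrow> 0) F"
    by (rule bounded_linear.tendsto_zero[OF \<open>bounded_linear D\<close>])
  have right_defect: "((\<lambda>e. a - a * e) \<longlongrightarrow> 0) F"
    using tendsto_diff[OF tendsto_const[of a] right] by simp
  have "((\<lambda>e. rm (D (a - e * a)) e) \<longlongrightarrow> 0) F"
    using left_defect bounded by (rule bounded_bilinear.tendsto_zero_prod_Bfun[OF bounded_bilinear_rm])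
  moreover have "bounded_bilinear (\<lambda>e b. rm (D e) b)"
    using bounded_bilinear_rm \<open>bounded_linear D\<close> bounded_linear_ident by (rule bounded_bilinear.comp)
  then have "((\<lambda>e. rm (D e) (a - a * e)) \<longlongrightarrow> 0) F"
    using bounded right_defect by (rule bounded_bilinear.tendsto_Bfun_prod_zero)
  ultimately have "((\<lambda>e. D (a - e * a) - rm (D (a - e * a)) e + rm (D e) (a - a * e)) \<longlongrightarrow> 0 - 0 + 0) F"
    using left_defect by (intro tendsto_add tendsto_diff)
  then have "((\<lambda>e. D a - compress e (D a)) \<longlongrightarrow> 0) F"
    by (simp add: compress_defect)
  from tendsto_diff[OF tendsto_const[of "D a"] this] show ?thesis
    by simp
qed

lemma commutator_add: "commutator a (x + y) = commutator a x + commutator a y"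
  and commutator_diff: "commutator a (x - y) = commutator a x - commutator a y"
  by (simp_all add: commutator_def bilinear_simps)

lemma commutator_rm_central:
  assumes "a * e = e * a"
  shows "commutator a (rm x e) = rm (commutator a x) e"
  using assms by (simp add: commutator_def bilinear_simps rm_lm rm_rm)

lemma tendsto_commutator_lm_central:
  assumes central: "a * e = e * a"
    and semi_inner: "\<forall>b. ((\<lambda>i. lm b (\<xi> i) - rm (\<eta> i) b) \<longlongrightarrow> D b) F"
  shows "((\<lambda>i. commutator a (lm e (\<xi> i))) \<longlongrightarrow> lm e (D a)) F"
proof -
  have "commutator a (lm e x) = (lm (e * a) x - rm y (e * a)) - rm (lm e x - rm y e) a" for x y
    using central by (simp add: commutator_def bilinear_simps lm_lm rm_rm)
  moreover have "((\<lambda>i. (lm (e * a) (\<xi> i) - rm (\<eta> i) (e * a)) - rm (lm e (\<xi> i) - rm (\<eta> i) e) a)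
      \<longlongrightarrow> D (e * a) - rm (D e) a) F"
    using semi_inner by (intro tendsto_diff bounded_bilinear.tendsto[OF bounded_bilinear_rm] tendsto_const) auto
  ultimately show ?thesis
    by (simp add: D_mult)
qed

lemma tendsto_commutator_rm_central:
  assumes central: "a * e = e * a"
    and semi_inner: "\<forall>b. ((\<lambda>i. lm b (\<xi> i) - rm (\<eta> i) b) \<longlongrightarrow> D b) F"
  shows "((\<lambda>i. commutator a (rm (\<eta> i) e)) \<longlongrightarrow> rm (D a) e) F"
proof -
  have "commutator a (rm y e) = (lm (e * a) x - rm y (e * a)) - lm a (lm e x - rm y e)" for x y
    using central by (simp add: commutator_def bilinear_simps lm_lm rm_rm rm_lm)
  moreover have "((\<lambda>i. (lm (e * a) (\<xi> i) - rm (\<eta> i) (e * a)) - lm a (lm e (\<xi> i) - rm (\<eta> i) e))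
      \<longlongrightarrow> D (e * a) - lm a (D e)) F"
    using semi_inner by (intro tendsto_diff bounded_bilinear.tendsto[OF bounded_bilinear_lm] tendsto_const) auto
  moreover have "D (e * a) = lm a (D e) + rm (D a) e"
    using central D_mult[of a e] by simp
  ultimately show ?thesis
    by simp
qed

lemma tendsto_commutator_compress:
  assumes central: "a * e = e * a"
    and semi_inner: "\<forall>b. ((\<lambda>i. lm b (\<xi> i) - rm (\<eta> i) b) \<longlongrightarrow> D b) F"
  shows "((\<lambda>i. commutator a (lm e (\<xi> i) + rm (\<eta> i) e - rm (lm e (\<xi> i)) e)) \<longlongrightarrow> compress e (D a)) F"
proof -
  have commutator_rm_lm: "commutator a (rm (lm e x) e) = rm (commutator a (lm e x)) e" for x
    by (rule commutator_rm_central[OF central])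
  show ?thesis
    unfolding commutator_add commutator_diff commutator_rm_lm compress_def
    using assms by (intro tendsto_add tendsto_diff tendsto_commutator_lm_central
        tendsto_commutator_rm_central bounded_bilinear.tendsto[OF bounded_bilinear_rm] tendsto_const)
qed

lemma approx_inner_if_central_bai:
  assumes "has_central_bai TYPE('a)" and "approx_semi_inner lm rm D"
  shows "approx_inner lm rm D"
proof -
  obtain E :: "'a filter" and K where "E \<noteq> bot"
    and central_bounded: "eventually (\<lambda>e. (\<forall>b. e * b = b * e) \<and> norm e \<le> K) E"
    and left_unit: "\<And>a. ((\<lambda>e. e * a) \<longlongrightarrow> a) E"
    using assms(1) unfolding has_central_bai_def by blast
  obtain F :: "('x \<times> 'x) filter" where "bounded_linear D" and "F \<noteq> bot"
    and semi_inner: "\<forall>b. ((\<lambda>p. lm b (fst p) - rm (snd p) b) \<longlongrightarrow> D b) F"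
    using assms(2) unfolding approx_semi_inner_def by (auto simp: split_beta')
  have "Bfun (\<lambda>e. e) E"
    using central_bounded by (intro BfunI) (auto elim: eventually_mono)
  moreover have "((\<lambda>e. a * e) \<longlongrightarrow> a) E" for a
    using left_unit[of a] by (rule tendsto_cong[THEN iffD1, rotated])
      (use central_bounded in \<open>auto elim: eventually_mono\<close>)
  ultimately have outer: "((\<lambda>e. compress e (D a)) \<longlongrightarrow> D a) E" for a
    using \<open>bounded_linear D\<close> left_unit by (intro tendsto_compress)
  have inner: "eventually (\<lambda>e. \<forall>a. ((\<lambda>p. commutator a (lm e (fst p) + rm (snd p) e - rm (lm e (fst p)) e))
      \<longlongrightarrow> compress e (D a)) F) E"
    using central_bounded
    by (rule eventually_mono) (auto intro: tendsto_commutator_compress[OF _ semi_inner])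
  obtain G where "G \<noteq> bot" "\<forall>a. (commutator a \<longlongrightarrow> D a) G"
    using ex_proper_filter_tendsto_diagonal[OF \<open>E \<noteq> bot\<close> \<open>F \<noteq> bot\<close> inner outer] by blast
  then show ?thesis
    using \<open>bounded_linear D\<close> unfolding approx_inner_def commutator_def by blast
qed

end

theorem proposition2p4:
  fixes lm :: "'a::{real_normed_algebra,banach} \<Rightarrow> 'x::banach \<Rightarrow> 'x"
    and rm :: "'x \<Rightarrow> 'a \<Rightarrow> 'x"
    and D :: "'a \<Rightarrow> 'x"
  assumes "has_central_bai TYPE('a) \<or> (\<exists>u::'a. \<forall>a. u * a = a \<and> a * u = a)"
    and "banach_bimodule lm rm"
    and "derivation lm rm D"
    and "approx_semi_inner lm rm D"
  shows "approx_inner lm rm D"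
proof -
  interpret bimodule_derivation lm rm D
    using assms(2,3) by unfold_locales
  have "has_central_bai TYPE('a)"
    using assms(1) has_central_bai_if_unit by blast
  then show ?thesis
    using assms(4) by (rule approx_inner_if_central_bai)
qed

end
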